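(* Let $s,d_1,\ldots,d_n\ge0$ be real numbers and let $V_1,\ldots,V_n$ be vector subspaces of a finite-dimensional real vector space such that $$\sum_{i\in I}d_i+\dim\Big(\sum_{i\in I^c}V_i\Big)\ \ge\ s\qquad\text{for every } I\subset\{1,\ldots,n\}$$ (with $\sum_{i\in\emptyset}d_i=0$ and the empty sum of subspaces being $\{0\}$, of dimension $0$). For each $i$ fix a generating set $\{v^i_1,\ldots,v^i_{m_i}\}$ of $V_i$. Let $\mathbb J$ be the family of all tuples $J=(\mathrm j_1,\ldots,\mathrm j_n)$ with $\mathrm j_i\subset\{v^i_1,\ldots,v^i_{m_i}\}$ such that the family formed by all elements of $\mathrm j_1,\ldots,\mathrm j_n$ (taken together, as a family indexed by the pairs $(i,v)$ with $v\in\mathrm j_i$) is linearly independent and $\#\mathrm j_1+\cdots+\#\mathrm j_n\ge s$. For $J\in\mathbb J$ and $i\in\{1,\ldots,n\}$ put $$\widehat J(i):=(\#\mathrm j_1,\ldots,\#\mathrm j_n)+\big(s-(\#\mathrm j_1+\cdots+\#\mathrm j_n)\big)e_i\in\mathbb R^n,$$ where $e_1,\ldots,e_n$ is the canonical basis of $\mathbb R^n$, and let $\overline{\mathbb J}=\{(J,i)\in\mathbb J\times\{1,\ldots,n\}:\ \widehat J(i)\ge0\}$. Then there exist non-negative real numbers $(\alpha_{(J,i)})_{(J,i)\in\overline{\mathbb J}}$ with $\sum_{(J,i)\in\overline{\mathbb J}}\alpha_{(J,i)}=1$ such that $$\sum_{(J,i)\in\overline{\mathbb J}}\alpha_{(J,i)}\,\widehat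 J(i)\ \le\ (d_1,\ldots,d_n).$$
   Context: Inequalities between vectors of $\mathbb R^n$ ($\ge$, $\le$) are meant coordinatewise. $I^c=\{1,\ldots,n\}\setminus I$. *)

theory Defs
  imports "HOL-Analysis.Analysis"
begin

text \<open>Indices are 0..<n (standing for 1..n). A tuple J = (j_0,...,j_{n-1}) is a
function J :: nat => 'v set with J i a subset of the generating set G i for i < n
and J i = {} for i >= n (canonical representative).\<close>

definition tuple_pairs :: "nat \<Rightarrow> (nat \<Rightarrow> 'v set) \<Rightarrow> (nat \<times> 'v) set" where
  "tuple_pairs n J = Sigma {..<n} J"

text \<open>The family indexed by the pairs (i,v), v in J i, with value v is linearly
independent: it is injective and its image is an independent set.\<close>
definition family_independent :: "nat \<Rightarrow> (nat \<Rightarrow> 'v::real_vector set) \<Rightarrow> bool" where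
  "family_independent n J \<longleftrightarrow>
     inj_on snd (tuple_pairs n J) \<and> independent (snd ` tuple_pairs n J)"

definition JJ :: "nat \<Rightarrow> real \<Rightarrow> (nat \<Rightarrow> 'v::real_vector set) \<Rightarrow> (nat \<Rightarrow> 'v set) set" where
  "JJ n s G = {J. (\<forall>i<n. J i \<subseteq> G i) \<and> (\<forall>i\<ge>n. J i = {}) \<and>
                  family_independent n J \<and> (\<Sum>i<n. real (card (J i))) \<ge> s}"

definition Jhat :: "nat \<Rightarrow> real \<Rightarrow> (nat \<Rightarrow> 'v set) \<Rightarrow> nat \<Rightarrow> (nat \<Rightarrow> real)" where
  "Jhat n s J i = (\<lambda>k. real (card (J k)) +
       (if k = i then s - (\<Sum>l<n. real (card (J l))) else 0))"

definition JJbar :: "nat \<Rightarrow> real \<Rightarrow> (nat \<Rightarrow> 'v::real_vector set) \<Rightarrow> ((nat \<Rightarrow> 'v set) \<times> nat) set" where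
  "JJbar n s G = {(J, i). J \<in> JJ n s G \<and> i < n \<and> (\<forall>k<n. Jhat n s J i k \<ge> 0)}"

end

theory Submission
  imports Defs
begin

(* Write x(J,i) = Jhat J i - d for the "excess" of a pair (J,i) in JJbar.  The claim
   is that some convex combination of the finitely many vectors x(J,i) is <= 0 in every
   coordinate.  By a theorem of the alternative (Gordan/Ville type), proved below by
   Fourier-Motzkin elimination of one coordinate at a time, it suffices that for every weight
   vector w >= 0 some pair (J,i) satisfies  sum_k w_k x(J,i)_k <= 0.
   Such a pair is found greedily: order the indices so that w increases, extend a basis
   chain B_0 = {} <= B_1 <= ... through the generating sets in this order, stop at the first
   stage q at which #B_q >= s, let j_k consist of the vectors added while processing index k,
   and put the excess s - #B_q on the last processed index.  Along the ordering the coordinates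
   of Jhat are the increments of min(#B_j, s), and the dimension hypothesis, applied to the
   tails of the ordering, bounds the tail sums of these increments by the tail sums of d; an
   Abel summation against the increasing weights then gives the required inequality. *)

section \<open>Convex combinations of coordinate vectors\<close>

(* Convex combinations of a finite set of vectors of reals, indexed by nat;
   the space nat => real carries no vector-space instance, so this is done by hand. *)
definition conv_comb :: "(nat \<Rightarrow> real) set \<Rightarrow> (nat \<Rightarrow> real) set" where
  "conv_comb P = {c. \<exists>u. (\<forall>p\<in>P. 0 \<le> u p) \<and> sum u P = 1 \<and> c = (\<lambda>k. \<Sum>p\<in>P. u p * p k)}"

lemma conv_combI:
  assumes "\<forall>p\<in>P. 0 \<le> u p" "sum u P = 1" "\<And>k. c k = (\<Sum>p\<in>P. u p * p k)"
  shows "c \<in> conv_comb P"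
  using assms unfolding conv_comb_def by (auto intro!: exI[of _ u])

lemma conv_combE:
  assumes "c \<in> conv_comb P"
  obtains u where "\<forall>p\<in>P. 0 \<le> u p" "sum u P = 1" "\<And>k. c k = (\<Sum>p\<in>P. u p * p k)"
  using assms unfolding conv_comb_def by auto

lemma conv_comb_mem:
  assumes "finite P" "x \<in> P" shows "x \<in> conv_comb P"
proof (rule conv_combI[of P "\<lambda>p. if p = x then 1 else 0"])
  show "sum (\<lambda>p. if p = x then 1 else 0) P = (1::real)" using assms by simp
  fix k show "x k = (\<Sum>p\<in>P. (if p = x then 1 else 0) * p k)"
  proof -
    have "(\<Sum>p\<in>P. (if p = x then 1 else 0) * p k) = (\<Sum>p\<in>P. if p = x then x k else 0)"
      by (rule sum.cong) auto
    then show ?thesis using assms by simp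
  qed
qed simp

lemma conv_comb_convex:
  assumes "x \<in> conv_comb P" "y \<in> conv_comb P" "0 \<le> a" "0 \<le> b" "a + b = 1"
  shows "(\<lambda>k. a * x k + b * y k) \<in> conv_comb P"
proof -
  obtain u where u: "\<forall>p\<in>P. 0 \<le> u p" "sum u P = 1" "\<And>k. x k = (\<Sum>p\<in>P. u p * p k)"
    using conv_combE[OF assms(1)] by blast
  obtain v where v: "\<forall>p\<in>P. 0 \<le> v p" "sum v P = 1" "\<And>k. y k = (\<Sum>p\<in>P. v p * p k)"
    using conv_combE[OF assms(2)] by blast
  show ?thesis
  proof (rule conv_combI[of P "\<lambda>p. a * u p + b * v p"])
    show "\<forall>p\<in>P. 0 \<le> a * u p + b * v p" using u v assms by simp
    show "(\<Sum>p\<in>P. a * u p + b * v p) = 1"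
      using u v assms by (simp add: sum.distrib sum_distrib_left[symmetric])
    fix k show "a * x k + b * y k = (\<Sum>p\<in>P. (a * u p + b * v p) * p k)"
      using u v by (simp add: sum.distrib sum_distrib_left algebra_simps)
  qed
qed

lemma conv_comb_trans:
  assumes "finite P'" "P' \<subseteq> conv_comb P" "c \<in> conv_comb P'"
  shows "c \<in> conv_comb P"
proof -
  obtain u where u: "\<forall>p\<in>P'. 0 \<le> u p" "sum u P' = 1" "\<And>k. c k = (\<Sum>p\<in>P'. u p * p k)"
    using conv_combE[OF assms(3)] by blast
  have "\<forall>p'\<in>P'. \<exists>v. (\<forall>p\<in>P. 0 \<le> v p) \<and> sum v P = 1 \<and> (\<forall>k. p' k = (\<Sum>p\<in>P. v p * p k))"
    using assms(2) unfolding conv_comb_def by fastforce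
  then obtain v where v: "\<forall>p'\<in>P'. (\<forall>p\<in>P. 0 \<le> v p' p) \<and> sum (v p') P = 1 \<and>
      (\<forall>k. p' k = (\<Sum>p\<in>P. v p' p * p k))"
    by (rule bchoice[elim_format]) blast
  show ?thesis
  proof (rule conv_combI[of P "\<lambda>p. \<Sum>p'\<in>P'. u p' * v p' p"])
    show "\<forall>p\<in>P. 0 \<le> (\<Sum>p'\<in>P'. u p' * v p' p)" using u v by (simp add: sum_nonneg)
    have "(\<Sum>p\<in>P. \<Sum>p'\<in>P'. u p' * v p' p) = (\<Sum>p'\<in>P'. u p' * sum (v p') P)"
      by (subst sum.swap) (simp add: sum_distrib_left)
    then show "(\<Sum>p\<in>P. \<Sum>p'\<in>P'. u p' * v p' p) = 1" using u v by simp
    fix k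
    have "c k = (\<Sum>p'\<in>P'. u p' * (\<Sum>p\<in>P. v p' p * p k))"
      using u(3) v by (simp cong: sum.cong)
    also have "\<dots> = (\<Sum>p\<in>P. (\<Sum>p'\<in>P'. u p' * v p' p) * p k)"
      by (simp add: sum_distrib_left sum_distrib_right mult.assoc) (rule sum.swap)
    finally show "c k = (\<Sum>p\<in>P. (\<Sum>p'\<in>P'. u p' * v p' p) * p k)" .
  qed
qed

lemma conv_comb_coord_nonpos:
  assumes "c \<in> conv_comb P" "\<forall>p\<in>P. p m \<le> 0" shows "c m \<le> 0"
proof -
  obtain u where u: "\<forall>p\<in>P. 0 \<le> u p" "c m = (\<Sum>p\<in>P. u p * p m)"
    using conv_combE[OF assms(1)] by metis
  have "(\<Sum>p\<in>P. u p * p m) \<le> 0"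
    using u(1) assms(2) by (intro sum_nonpos) (simp add: mult_nonneg_nonpos)
  then show ?thesis using u(2) by simp
qed

(* Weights on an image f ` A are spread evenly over the fibres, giving weights on A. *)
lemma conv_comb_image:
  assumes "finite A" "c \<in> conv_comb (f ` A)"
  obtains \<alpha> where "\<forall>a\<in>A. 0 \<le> \<alpha> a" "sum \<alpha> A = 1" "\<And>k. c k = (\<Sum>a\<in>A. \<alpha> a * f a k)"
proof -
  obtain u where u: "\<forall>y\<in>f ` A. 0 \<le> u y" "sum u (f ` A) = 1" "\<And>k. c k = (\<Sum>y\<in>f ` A. u y * y k)"
    using conv_combE[OF assms(2)] by blast
  define \<alpha> where "\<alpha> a = u (f a) / card {b\<in>A. f b = f a}" for a
  have spread: "(\<Sum>a\<in>A. \<alpha> a * F (f a)) = (\<Sum>y\<in>f ` A. u y * F y)" for F :: "(nat \<Rightarrow> real) \<Rightarrow> real"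
  proof -
    have "(\<Sum>a\<in>A. \<alpha> a * F (f a)) = (\<Sum>y\<in>f ` A. \<Sum>a\<in>{b\<in>A. f b = y}. \<alpha> a * F (f a))"
      using assms(1) by (rule sum.image_gen)
    also have "\<dots> = (\<Sum>y\<in>f ` A. u y * F y)"
    proof (rule sum.cong[OF refl])
      fix y assume "y \<in> f ` A"
      then have "card {b\<in>A. f b = y} \<noteq> 0" using assms(1) by auto
      moreover have "(\<Sum>a\<in>{b\<in>A. f b = y}. \<alpha> a * F (f a))
          = (\<Sum>a\<in>{b\<in>A. f b = y}. u y / card {b\<in>A. f b = y} * F y)"
        by (rule sum.cong) (auto simp: \<alpha>_def)
      ultimately show "(\<Sum>a\<in>{b\<in>A. f b = y}. \<alpha> a * F (f a)) = u y * F y" by simp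
    qed
    finally show ?thesis .
  qed
  show thesis
  proof
    show "\<forall>a\<in>A. 0 \<le> \<alpha> a" using u(1) by (simp add: \<alpha>_def)
    show "sum \<alpha> A = 1" using spread[of "\<lambda>_. 1"] u(2) by simp
    show "c k = (\<Sum>a\<in>A. \<alpha> a * f a k)" for k using spread[of "\<lambda>y. y k"] u(3) by simp
  qed
qed

section \<open>A theorem of the alternative\<close>

lemma finite_sets_separated:
  fixes A B :: "real set"
  assumes "finite A" "finite B" "\<forall>a\<in>A. \<forall>b\<in>B. a < b"
  obtains t where "\<forall>a\<in>A. a < t" "\<forall>b\<in>B. t < b"
proof (cases "A = {} \<or> B = {}")
  case True
  then consider "A = {}" "B = {}" | "A = {}" "B \<noteq> {}" | "A \<noteq> {}" "B = {}" by blast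
  then show thesis
  proof cases
    case 1 then show thesis using that[of 0] by simp
  next
    case 2 then show thesis using that[of "Min B - 1"] Min_le[OF assms(2)] by force
  next
    case 3 then show thesis using that[of "Max A + 1"] Max_ge[OF assms(1)] by force
  qed
next
  case False
  then have "Max A < Min B" using assms by simp
  show thesis
  proof (rule that)
    show "\<forall>a\<in>A. a < (Max A + Min B) / 2"
      using Max_ge[OF assms(1)] \<open>Max A < Min B\<close> by fastforce
    show "\<forall>b\<in>B. (Max A + Min B) / 2 < b"
      using Min_le[OF assms(2)] \<open>Max A < Min B\<close> by fastforce
  qed
qed

(* The one-dimensional core of Fourier-Motzkin elimination: if x p > 0 wherever a p <= 0, and
   the cross condition holds for every pair with a p < 0 < a q, then some t >= 0 makes all
   x p + t * a p positive. *)
lemma positive_shift: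
  fixes x a :: "'a \<Rightarrow> real"
  assumes "finite P"
    and nonpos: "\<forall>p\<in>P. a p \<le> 0 \<longrightarrow> 0 < x p"
    and cross: "\<forall>p\<in>P. \<forall>q\<in>P. a p < 0 \<longrightarrow> 0 < a q \<longrightarrow> a p * x q < a q * x p"
  obtains t where "0 \<le> t" "\<forall>p\<in>P. 0 < x p + t * a p"
proof -
  let ?lower = "insert 0 ((\<lambda>q. - x q / a q) ` {q\<in>P. 0 < a q})"
  let ?upper = "(\<lambda>p. x p / - a p) ` {p\<in>P. a p < 0}"
  have fin: "finite ?lower" "finite ?upper" using assms(1) by auto
  have sep: "\<forall>l\<in>?lower. \<forall>u\<in>?upper. l < u"
  proof (intro ballI)
    fix l u assume "l \<in> ?lower" "u \<in> ?upper"
    then obtain p where p: "p \<in> P" "a p < 0" "u = x p / - a p" by blast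
    from \<open>l \<in> ?lower\<close> consider "l = 0" | q where "q \<in> P" "0 < a q" "l = - x q / a q" by blast
    then show "l < u"
    proof cases
      case 1 then show ?thesis using p nonpos by (simp add: divide_pos_neg)
    next
      case 2
      then have "a p * x q < a q * x p" using p cross by blast
      then show ?thesis unfolding 2(3) p(3) using 2 p
        by (simp add: divide_less_eq less_divide_eq field_simps)
    qed
  qed
  obtain t where lo: "\<forall>l\<in>?lower. l < t" and up: "\<forall>u\<in>?upper. t < u"
    by (rule finite_sets_separated[OF fin sep])
  show thesis
  proof
    show "0 \<le> t" using lo by simp
    show "\<forall>p\<in>P. 0 < x p + t * a p"
    proof
      fix p assume "p \<in> P"
      consider "a p = 0" | "a p < 0" | "0 < a p" by linarith
      then show "0 < x p + t * a p"
      proof cases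
        case 1 then show ?thesis using \<open>p \<in> P\<close> nonpos by simp
      next
        case 2
        then have "t < x p / - a p" using \<open>p \<in> P\<close> up by blast
        then show ?thesis using 2 by (simp add: field_simps)
      next
        case 3
        then have "- x p / a p < t" using \<open>p \<in> P\<close> lo by blast
        then show ?thesis using 3 by (simp add: field_simps)
      qed
    qed
  qed
qed

(* The point on the segment [p, q] whose m-th coordinate vanishes (for p m < 0 < q m). *)
definition mix :: "nat \<Rightarrow> (nat \<Rightarrow> real) \<Rightarrow> (nat \<Rightarrow> real) \<Rightarrow> (nat \<Rightarrow> real)" where
  "mix m p q = (\<lambda>k. (q m * p k - p m * q k) / (q m - p m))"

(* Fourier-Motzkin elimination of coordinate m: keep the points with m-th coordinate <= 0 and
   add all segment points with m-th coordinate 0. *)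
definition eliminate :: "nat \<Rightarrow> (nat \<Rightarrow> real) set \<Rightarrow> (nat \<Rightarrow> real) set" where
  "eliminate m P = {p\<in>P. p m \<le> 0} \<union>
     (\<lambda>(p, q). mix m p q) ` {(p, q)\<in>P \<times> P. p m < 0 \<and> 0 < q m}"

lemma eliminate_finite: "finite P \<Longrightarrow> finite (eliminate m P)"
  unfolding eliminate_def by (auto intro: finite_subset[of _ "P \<times> P"])

lemma eliminate_coord: "p \<in> eliminate m P \<Longrightarrow> p m \<le> 0"
  unfolding eliminate_def mix_def by auto

lemma eliminate_subset: "finite P \<Longrightarrow> eliminate m P \<subseteq> conv_comb P"
proof
  fix r assume "finite P" "r \<in> eliminate m P"
  then consider "r \<in> P" | p q where "p \<in> P" "q \<in> P" "p m < 0" "0 < q m" "r = mix m p q"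
    unfolding eliminate_def by auto
  then show "r \<in> conv_comb P"
  proof cases
    case 1 then show ?thesis using \<open>finite P\<close> by (rule conv_comb_mem[rotated])
  next
    case 2
    have D: "0 < q m - p m" using 2 by simp
    have "(\<lambda>k. q m / (q m - p m) * p k + - p m / (q m - p m) * q k) \<in> conv_comb P"
    proof (rule conv_comb_convex)
      show "q m / (q m - p m) + - p m / (q m - p m) = 1"
        using D by (metis add_divide_distrib diff_conv_add_uminus divide_self less_irrefl)
      show "0 \<le> q m / (q m - p m)" "0 \<le> - p m / (q m - p m)"
        using 2 D by (simp_all add: divide_nonpos_pos)
    qed (use 2 \<open>finite P\<close> in \<open>auto intro: conv_comb_mem\<close>)
    moreover have "(\<lambda>k. q m / (q m - p m) * p k + - p m / (q m - p m) * q k) = r"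
      unfolding 2(5) mix_def by (simp add: fun_eq_iff diff_divide_distrib)
    ultimately show ?thesis by simp
  qed
qed

lemma eliminate_weights:
  assumes "finite P"
    and weights: "\<And>w. \<forall>k<Suc n. 0 \<le> w k \<Longrightarrow> \<exists>p\<in>P. (\<Sum>k<Suc n. w k * p k) \<le> 0"
    and w: "\<forall>k<n. 0 \<le> w k"
  shows "\<exists>p\<in>eliminate n P. (\<Sum>k<n. w k * p k) \<le> 0"
proof (rule ccontr)
  define X where "X p = (\<Sum>k<n. w k * p k)" for p :: "nat \<Rightarrow> real"
  assume "\<not> ?thesis"
  then have pos: "0 < X p" if "p \<in> eliminate n P" for p using that by (auto simp: X_def not_le)
  obtain t where "0 \<le> t" and t: "\<forall>p\<in>P. 0 < X p + t * p n"
  proof (rule positive_shift[OF \<open>finite P\<close>])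
    show "\<forall>p\<in>P. p n \<le> 0 \<longrightarrow> 0 < X p" using pos by (auto simp: eliminate_def)
    show "\<forall>p\<in>P. \<forall>q\<in>P. p n < 0 \<longrightarrow> 0 < q n \<longrightarrow> p n * X q < q n * X p"
    proof (intro ballI impI)
      fix p q assume pq: "p \<in> P" "q \<in> P" "p n < 0" "0 < q n"
      let ?r = "mix n p q"
      have "X ?r = (\<Sum>k<n. w k * (q n * p k - p n * q k)) / (q n - p n)"
        by (simp add: X_def mix_def sum_divide_distrib[symmetric])
      also have "\<dots> = (q n * X p - p n * X q) / (q n - p n)"
        by (simp add: X_def right_diff_distrib sum_subtractf sum_distrib_left mult.left_commute)
      finally have "X ?r = (q n * X p - p n * X q) / (q n - p n)" .
      moreover have "?r \<in> eliminate n P" using pq unfolding eliminate_def by force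
      ultimately have "0 < (q n * X p - p n * X q) / (q n - p n)" using pos by metis
      then show "p n * X q < q n * X p" using pq by (simp add: zero_less_divide_iff)
    qed
  qed
  have "\<forall>k<Suc n. 0 \<le> (w(n := t)) k" using w \<open>0 \<le> t\<close> by (simp add: less_Suc_eq)
  then obtain p where "p \<in> P" "(\<Sum>k<Suc n. (w(n := t)) k * p k) \<le> 0" using weights by blast
  moreover have "(\<Sum>k<Suc n. (w(n := t)) k * p k) = X p + t * p n" by (simp add: X_def)
  ultimately show False using t by fastforce
qed

lemma convex_combination_nonpos:
  assumes "finite P"
    and "\<And>w. \<forall>k<n. 0 \<le> w k \<Longrightarrow> \<exists>p\<in>P. (\<Sum>k<n. w k * p k) \<le> 0"
  shows "\<exists>c\<in>conv_comb P. \<forall>k<n. c k \<le> 0"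
  using assms
proof (induction n arbitrary: P)
  case 0
  then obtain p where "p \<in> P" by blast
  then show ?case using conv_comb_mem[OF "0.prems"(1)] by blast
next
  case (Suc n)
  have "finite (eliminate n P)" using Suc.prems(1) by (rule eliminate_finite)
  then obtain c where c: "c \<in> conv_comb (eliminate n P)" "\<forall>k<n. c k \<le> 0"
    using Suc.IH eliminate_weights[OF Suc.prems] by blast
  have "c n \<le> 0" using conv_comb_coord_nonpos[OF c(1)] eliminate_coord by blast
  moreover have "c \<in> conv_comb P"
    using \<open>finite (eliminate n P)\<close> eliminate_subset[OF Suc.prems(1)] c(1) by (rule conv_comb_trans)
  ultimately show ?case using c(2) by (auto simp: less_Suc_eq)
qed

section \<open>A greedy chain of independent sets\<close>

fun greedy_chain :: "(nat \<Rightarrow> 'v::real_vector set) \<Rightarrow> nat \<Rightarrow> 'v set" where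
  "greedy_chain S 0 = {}"
| "greedy_chain S (Suc j) = (SOME B. greedy_chain S j \<subseteq> B \<and> B \<subseteq> greedy_chain S j \<union> S j \<and>
      independent B \<and> greedy_chain S j \<union> S j \<subseteq> span B)"

declare greedy_chain.simps(2) [simp del]

lemma greedy_chain_step:
  assumes "independent (greedy_chain S j)"
  shows "greedy_chain S j \<subseteq> greedy_chain S (Suc j)"
    and "greedy_chain S (Suc j) \<subseteq> greedy_chain S j \<union> S j"
    and "independent (greedy_chain S (Suc j))"
    and "greedy_chain S j \<union> S j \<subseteq> span (greedy_chain S (Suc j))"
proof -
  obtain B where "greedy_chain S j \<subseteq> B" "B \<subseteq> greedy_chain S j \<union> S j" "independent B"
      "greedy_chain S j \<union> S j \<subseteq> span B"
    by (rule maximal_independent_subset_extend[of "greedy_chain S j" "greedy_chain S j \<union> S j"])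
      (use assms in auto)
  then have "\<exists>B. greedy_chain S j \<subseteq> B \<and> B \<subseteq> greedy_chain S j \<union> S j \<and> independent B \<and>
      greedy_chain S j \<union> S j \<subseteq> span B" by blast
  from someI_ex[OF this] show "greedy_chain S j \<subseteq> greedy_chain S (Suc j)"
    and "greedy_chain S (Suc j) \<subseteq> greedy_chain S j \<union> S j"
    and "independent (greedy_chain S (Suc j))"
    and "greedy_chain S j \<union> S j \<subseteq> span (greedy_chain S (Suc j))"
    unfolding greedy_chain.simps by blast+
qed

lemma greedy_chain_independent: "independent (greedy_chain S j)"
proof (induction j)
  case (Suc j) then show ?case by (rule greedy_chain_step(3))
qed (simp add: independent_empty)

lemma greedy_chain_finite: "finite (greedy_chain (S :: nat \<Rightarrow> 'v::euclidean_space set) j)"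
  using greedy_chain_independent by (rule finiteI_independent)

lemma greedy_chain_Suc:
  "greedy_chain S j \<subseteq> greedy_chain S (Suc j)" "greedy_chain S (Suc j) \<subseteq> greedy_chain S j \<union> S j"
  using greedy_chain_step[OF greedy_chain_independent] by blast+

lemma greedy_chain_mono: "a \<le> b \<Longrightarrow> greedy_chain S a \<subseteq> greedy_chain S b"
  by (rule lift_Suc_mono_le[of "greedy_chain S"]) (use greedy_chain_Suc(1) in auto)

lemma greedy_chain_subset: "greedy_chain S j \<subseteq> (\<Union>l<j. S l)"
proof (induction j)
  case (Suc j)
  then show ?case using greedy_chain_Suc(2)[of S j] by (auto simp: lessThan_Suc)
qed simp

lemma greedy_chain_spans: "(\<Union>l<j. S l) \<subseteq> span (greedy_chain S j)"
proof (induction j)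
  case (Suc j)
  have "span (greedy_chain S j) \<subseteq> span (greedy_chain S (Suc j))"
    by (rule span_mono[OF greedy_chain_Suc(1)])
  moreover have "S j \<subseteq> span (greedy_chain S (Suc j))"
    using greedy_chain_step(4)[OF greedy_chain_independent] by blast
  ultimately show ?case using Suc.IH by (auto simp: lessThan_Suc)
qed simp

(* Each stage of the chain is a basis of the span of the sets processed so far. *)
lemma dim_greedy_chain: "dim (\<Union>l<j. S l) = card (greedy_chain S j)"
proof -
  have "span (\<Union>l<j. S l) = span (greedy_chain S j)"
    unfolding span_eq using greedy_chain_subset greedy_chain_spans span_superset by blast
  then show ?thesis by (metis dim_span dim_span_eq_card_independent greedy_chain_independent)
qed

lemma greedy_chain_entry:
  assumes "v \<in> greedy_chain S m"
  obtains j where "j < m" "v \<in> greedy_chain S (Suc j) - greedy_chain S j"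
  using assms
proof (induction m)
  case (Suc m)
  then show ?case by (cases "v \<in> greedy_chain S m") (auto intro: less_SucI)
qed simp

lemma card_greedy_chain_increment:
  fixes S :: "nat \<Rightarrow> 'v::euclidean_space set"
  shows "real (card (greedy_chain S (Suc j) - greedy_chain S j))
       = real (card (greedy_chain S (Suc j))) - real (card (greedy_chain S j))"
proof -
  have "finite (greedy_chain S (Suc j))" "greedy_chain S j \<subseteq> greedy_chain S (Suc j)"
    by (simp_all add: greedy_chain_finite greedy_chain_Suc)
  then have "card (greedy_chain S (Suc j) - greedy_chain S j)
      = card (greedy_chain S (Suc j)) - card (greedy_chain S j)"
    and "card (greedy_chain S j) \<le> card (greedy_chain S (Suc j))"
    by (auto intro: card_mono card_Diff_subset finite_subset)
  then show ?thesis by simp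
qed

section \<open>Orderings and summation by parts\<close>

(* Abel summation: weighting a sequence with non-positive tail sums by non-negative increasing
   weights gives a non-positive sum. *)
lemma weighted_sum_nonpos:
  fixes a u :: "nat \<Rightarrow> real"
  assumes a_nonneg: "\<forall>j<n. 0 \<le> a j" and a_mono: "\<And>i j. i \<le> j \<Longrightarrow> j < n \<Longrightarrow> a i \<le> a j"
    and tails: "\<And>j. j \<le> n \<Longrightarrow> (\<Sum>l=j..<n. u l) \<le> 0"
  shows "(\<Sum>j<n. a j * u j) \<le> 0"
proof -
  have tail_bound: "(\<Sum>l=j..<n. a l * u l) \<le> a j * (\<Sum>l=j..<n. u l)" if "j \<le> n" for j
    using that
  proof (induction j rule: inc_induct)
    case (step j)
    have split: "{j..<n} = insert j {Suc j..<n}" using step.hyps by auto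
    have "a (Suc j) * (\<Sum>l=Suc j..<n. u l) \<le> a j * (\<Sum>l=Suc j..<n. u l)"
    proof (cases "Suc j < n")
      case True
      then show ?thesis using a_mono[of j "Suc j"] tails[of "Suc j"] by (simp add: mult_right_mono_neg)
    qed simp
    with step.IH have "(\<Sum>l=Suc j..<n. a l * u l) \<le> a j * (\<Sum>l=Suc j..<n. u l)" by linarith
    then show ?case unfolding split by (simp add: distrib_left)
  qed simp
  have "(\<Sum>j<n. a j * u j) \<le> a 0 * (\<Sum>l=0..<n. u l)"
    using tail_bound[of 0] by (simp add: atLeast0LessThan)
  also have "\<dots> \<le> 0"
    using a_nonneg tails[of 0] by (cases "n = 0") (simp_all add: mult_nonneg_nonpos)
  finally show ?thesis .
qed

lemma sorting_permutation:
  fixes w :: "nat \<Rightarrow> 'a::linorder"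
  obtains \<sigma> where "bij_betw \<sigma> {..<n} {..<n}" "\<And>i j. i \<le> j \<Longrightarrow> j < n \<Longrightarrow> w (\<sigma> i) \<le> w (\<sigma> j)"
proof
  define xs where "xs = sort_key w [0..<n]"
  have "distinct xs" "length xs = n" "set xs = {..<n}" unfolding xs_def by auto
  then show "bij_betw (\<lambda>j. xs ! j) {..<n} {..<n}"
    using bij_betw_nth[of xs "{..<n}" "{..<n}"] by (simp add: lessThan_atLeast0)
  fix i j assume "i \<le> j" "j < n"
  moreover have "sorted (map w xs)" unfolding xs_def by (rule sorted_sort_key)
  ultimately show "w (xs ! i) \<le> w (xs ! j)"
    using \<open>length xs = n\<close> by (auto simp: sorted_iff_nth_mono)
qed

lemma bij_image_complement_tail:
  fixes \<sigma> :: "nat \<Rightarrow> nat"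
  assumes "bij_betw \<sigma> {..<n} {..<n}" "j \<le> n"
  shows "{..<n} - \<sigma> ` {j..<n} = \<sigma> ` {..<j}"
proof -
  have "{..<n} - {j..<n} = {..<j}" using assms(2) by auto
  moreover have "\<sigma> ` ({..<n} - {j..<n}) = \<sigma> ` {..<n} - \<sigma> ` {j..<n}"
    using assms(1) by (intro inj_on_image_set_diff) (auto simp: bij_betw_def)
  ultimately show ?thesis using assms(1) by (simp add: bij_betw_def)
qed

lemma truncated_increment:
  fixes c :: "nat \<Rightarrow> real"
  assumes "mono c" "c 0 = 0" "0 \<le> s" "\<forall>j<q. c j < s" "s \<le> c q"
  shows "(if j < q then c (Suc j) - c j else 0) + (if j = q - 1 then s - c q else 0)
         = min (c (Suc j)) s - min (c j) s"
proof -
  have "c j \<le> c (Suc j)" using assms(1) by (simp add: monoD)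
  consider "Suc j = q" | "Suc j < q" | "q \<le> j" by linarith
  then show ?thesis
  proof cases
    case 1 then show ?thesis using assms by auto
  next
    case 2 then show ?thesis using assms by auto
  next
    case 3
    then have "s \<le> c j" using assms(1,5) monoD by fastforce
    moreover have "q = 0" if "j = q - 1" using that 3 by simp
    ultimately show ?thesis using 3 assms \<open>c j \<le> c (Suc j)\<close> by auto
  qed
qed

lemma weighted_truncated_increments:
  fixes \<sigma> :: "nat \<Rightarrow> nat" and c d w x :: "nat \<Rightarrow> real"
  assumes \<sigma>: "bij_betw \<sigma> {..<n} {..<n}"
    and w_nonneg: "\<forall>k<n. 0 \<le> w k" and w_sorted: "\<And>a b. a \<le> b \<Longrightarrow> b < n \<Longrightarrow> w (\<sigma> a) \<le> w (\<sigma> b)"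
    and d_nonneg: "\<forall>k<n. 0 \<le> d k"
    and c_hyp: "\<And>j. j \<le> n \<Longrightarrow> s \<le> (\<Sum>l=j..<n. d (\<sigma> l)) + c j"
    and x: "\<And>j. j < n \<Longrightarrow> x (\<sigma> j) = min (c (Suc j)) s - min (c j) s"
  shows "(\<Sum>k<n. w k * (x k - d k)) \<le> 0"
proof -
  define R where "R j = min (c j) s" for j
  have \<sigma>_lt: "\<sigma> j < n" if "j < n" for j using \<sigma> that by (auto simp: bij_betw_def)
  have "(\<Sum>k<n. w k * (x k - d k)) = (\<Sum>j<n. w (\<sigma> j) * (x (\<sigma> j) - d (\<sigma> j)))"
    using sum.reindex_bij_betw[OF \<sigma>, of "\<lambda>k. w k * (x k - d k)"] by simp
  also have "\<dots> = (\<Sum>j<n. w (\<sigma> j) * (R (Suc j) - R j - d (\<sigma> j)))"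
    using x by (simp add: R_def)
  also have "\<dots> \<le> 0"
  proof (rule weighted_sum_nonpos)
    show "\<forall>j<n. 0 \<le> w (\<sigma> j)" using w_nonneg \<sigma>_lt by simp
    show "w (\<sigma> a) \<le> w (\<sigma> b)" if "a \<le> b" "b < n" for a b using w_sorted that .
    fix j assume "j \<le> n"
    have "(\<Sum>l=j..<n. R (Suc l) - R l - d (\<sigma> l)) = R n - R j - (\<Sum>l=j..<n. d (\<sigma> l))"
      using sum_Suc_diff'[OF \<open>j \<le> n\<close>, of R] by (simp add: sum_subtractf)
    moreover have "0 \<le> (\<Sum>l=j..<n. d (\<sigma> l))" using d_nonneg \<sigma>_lt by (intro sum_nonneg) auto
    ultimately show "(\<Sum>l=j..<n. R (Suc l) - R l - d (\<sigma> l)) \<le> 0"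
      using c_hyp[OF \<open>j \<le> n\<close>] c_hyp[of n] by (auto simp: R_def min_def)
  qed
  finally show ?thesis .
qed

section \<open>From the greedy chain to an element of JJbar\<close>

lemma span_union_spans: "span (\<Union>i\<in>I. span (G i)) = span (\<Union>i\<in>I. G i)"
  unfolding span_eq by (auto intro: span_superset[THEN subsetD] span_mono[THEN subsetD])

(* The dimension hypothesis for the tail I = sigma ` {j..<n} of an ordering: its complement
   spans a space whose dimension is the size of stage j of the chain. *)
lemma dimension_hyp_along_order:
  fixes G V :: "nat \<Rightarrow> 'v::euclidean_space set" and \<sigma> :: "nat \<Rightarrow> nat"
  assumes \<sigma>: "bij_betw \<sigma> {..<n} {..<n}" and "j \<le> n"
    and gen_span: "\<forall>i<n. span (G i) = V i"
    and hyp: "\<forall>I. I \<subseteq> {..<n} \<longrightarrow>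
               (\<Sum>i\<in>I. d i) + real (dim (span (\<Union>i\<in>{..<n} - I. V i))) \<ge> s"
  shows "s \<le> (\<Sum>l=j..<n. d (\<sigma> l)) + card (greedy_chain (G \<circ> \<sigma>) j)"
proof -
  have \<sigma>_lt: "\<sigma> l < n" if "l < n" for l using \<sigma> that by (auto simp: bij_betw_def)
  have "\<sigma> ` {j..<n} \<subseteq> {..<n}" using \<sigma>_lt by auto
  then have "s \<le> (\<Sum>i\<in>\<sigma> ` {j..<n}. d i) + dim (span (\<Union>i\<in>{..<n} - \<sigma> ` {j..<n}. V i))"
    using hyp by blast
  moreover have "inj_on \<sigma> {j..<n}"
    using \<sigma> by (rule inj_on_subset[OF bij_betw_imp_inj_on]) auto
  then have "(\<Sum>i\<in>\<sigma> ` {j..<n}. d i) = (\<Sum>l=j..<n. d (\<sigma> l))"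
    by (simp add: sum.reindex)
  moreover have "(\<Union>i\<in>{..<n} - \<sigma> ` {j..<n}. V i) = (\<Union>l<j. span ((G \<circ> \<sigma>) l))"
    using bij_image_complement_tail[OF \<sigma> \<open>j \<le> n\<close>] gen_span \<sigma>_lt \<open>j \<le> n\<close> by auto
  ultimately show ?thesis using dim_greedy_chain[of "G \<circ> \<sigma>" j] by (simp add: span_union_spans)
qed

definition chain_tuple :: "(nat \<Rightarrow> nat) \<Rightarrow> (nat \<Rightarrow> 'v set) \<Rightarrow> nat \<Rightarrow> nat \<Rightarrow> 'v set" where
  "chain_tuple \<sigma> B q k = (\<Union>j\<in>{j. j < q \<and> \<sigma> j = k}. B (Suc j) - B j)"

lemma mem_chain_tuple:
  "v \<in> chain_tuple \<sigma> B q k \<longleftrightarrow> (\<exists>j<q. \<sigma> j = k \<and> v \<in> B (Suc j) \<and> v \<notin> B j)"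
  by (auto simp: chain_tuple_def)

lemma chain_tuple_at:
  fixes \<sigma> :: "nat \<Rightarrow> nat"
  assumes "inj_on \<sigma> {..<n}" "q \<le> n" "j < n"
  shows "chain_tuple \<sigma> B q (\<sigma> j) = (if j < q then B (Suc j) - B j else {})"
proof -
  have "{j'. j' < q \<and> \<sigma> j' = \<sigma> j} = (if j < q then {j} else {})"
    using assms by (auto simp: inj_on_def)
  then show ?thesis unfolding chain_tuple_def by auto
qed

lemma chain_tuple_partition:
  fixes S :: "nat \<Rightarrow> 'v::real_vector set" and \<sigma> :: "nat \<Rightarrow> nat"
  defines "B \<equiv> greedy_chain S"
  assumes \<sigma>_lt: "\<forall>j<q. \<sigma> j < n"
  shows "inj_on snd (tuple_pairs n (chain_tuple \<sigma> B q))"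
    and "snd ` tuple_pairs n (chain_tuple \<sigma> B q) = B q"
proof -
  have disjoint: "j = j'" if "v \<in> B (Suc j)" "v \<notin> B j" "v \<in> B (Suc j')" "v \<notin> B j'" for v j j'
    using that greedy_chain_mono[of "Suc j" j' S] greedy_chain_mono[of "Suc j'" j S]
    by (cases j j' rule: linorder_cases) (auto simp: B_def)
  show "inj_on snd (tuple_pairs n (chain_tuple \<sigma> B q))"
  proof (rule inj_onI, clarsimp simp: tuple_pairs_def)
    fix k v k' assume "v \<in> chain_tuple \<sigma> B q k" "v \<in> chain_tuple \<sigma> B q k'"
    then obtain j j' where "\<sigma> j = k" "v \<in> B (Suc j)" "v \<notin> B j"
        and "\<sigma> j' = k'" "v \<in> B (Suc j')" "v \<notin> B j'"
      by (auto simp: mem_chain_tuple)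
    then show "k = k'" using disjoint by blast
  qed
  show "snd ` tuple_pairs n (chain_tuple \<sigma> B q) = B q"
  proof
    show "snd ` tuple_pairs n (chain_tuple \<sigma> B q) \<subseteq> B q"
    proof (clarsimp simp: tuple_pairs_def)
      fix k v assume "v \<in> chain_tuple \<sigma> B q k"
      then obtain j where "j < q" "v \<in> B (Suc j)" by (auto simp: mem_chain_tuple)
      then show "v \<in> B q" using greedy_chain_mono[of "Suc j" q] by (auto simp: B_def)
    qed
    show "B q \<subseteq> snd ` tuple_pairs n (chain_tuple \<sigma> B q)"
    proof
      fix v assume "v \<in> B q"
      then obtain j where "j < q" "v \<in> B (Suc j) - B j"
        unfolding B_def by (rule greedy_chain_entry)
      then have "(\<sigma> j, v) \<in> tuple_pairs n (chain_tuple \<sigma> B q)"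
        using \<sigma>_lt by (auto simp: tuple_pairs_def mem_chain_tuple)
      then show "v \<in> snd ` tuple_pairs n (chain_tuple \<sigma> B q)" by force
    qed
  qed
qed

lemma chain_tuple_in_JJ:
  fixes G :: "nat \<Rightarrow> 'v::euclidean_space set" and \<sigma> :: "nat \<Rightarrow> nat" and s :: real
  defines "B \<equiv> greedy_chain (G \<circ> \<sigma>)"
  assumes \<sigma>: "bij_betw \<sigma> {..<n} {..<n}" and "q \<le> n" and gen_fin: "\<forall>i<n. finite (G i)"
    and "s \<le> card (B q)"
  shows "chain_tuple \<sigma> B q \<in> JJ n s G"
    and "(\<Sum>k<n. card (chain_tuple \<sigma> B q k)) = card (B q)"
proof -
  define J where "J = chain_tuple \<sigma> B q"
  have \<sigma>_lt: "\<forall>j<q. \<sigma> j < n" using \<sigma> \<open>q \<le> n\<close> by (auto simp: bij_betw_def)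
  note inj = chain_tuple_partition(1)[OF \<sigma>_lt, of "G \<circ> \<sigma>", folded B_def J_def]
  note img = chain_tuple_partition(2)[OF \<sigma>_lt, of "G \<circ> \<sigma>", folded B_def J_def]
  have sub: "J k \<subseteq> G k" for k
  proof
    fix v assume "v \<in> J k"
    then obtain j where "\<sigma> j = k" "v \<in> B (Suc j) - B j" by (auto simp: J_def mem_chain_tuple)
    then show "v \<in> G k" using greedy_chain_Suc(2)[of "G \<circ> \<sigma>" j] by (auto simp: B_def)
  qed
  have out: "J k = {}" if "n \<le> k" for k
    using \<sigma>_lt that by (force simp: J_def mem_chain_tuple)
  have "\<forall>k\<in>{..<n}. finite (J k)" using sub gen_fin finite_subset by blast
  then have "(\<Sum>k<n. card (J k)) = card (tuple_pairs n J)" by (simp add: tuple_pairs_def)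
  also have "\<dots> = card (B q)" using inj img by (metis card_image)
  finally show sum: "(\<Sum>k<n. card (chain_tuple \<sigma> B q k)) = card (B q)" by (simp add: J_def)
  have "independent (B q)" by (simp add: B_def greedy_chain_independent)
  moreover have "(\<Sum>k<n. real (card (J k))) = real (card (B q))"
    using sum by (simp add: J_def flip: of_nat_sum)
  ultimately show "chain_tuple \<sigma> B q \<in> JJ n s G"
    unfolding J_def[symmetric] JJ_def family_independent_def mem_Collect_eq
    using sub out inj img \<open>s \<le> card (B q)\<close> by simp
qed

lemma greedy_selection:
  fixes n :: nat and s :: real and d w :: "nat \<Rightarrow> real"
    and V G :: "nat \<Rightarrow> 'v::euclidean_space set"
  assumes n_pos: "n \<ge> 1"
    and s_nonneg: "s \<ge> 0"
    and d_nonneg: "\<forall>i<n. d i \<ge> 0"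
    and gen_fin: "\<forall>i<n. finite (G i)"
    and gen_span: "\<forall>i<n. span (G i) = V i"
    and hyp: "\<forall>I. I \<subseteq> {..<n} \<longrightarrow>
               (\<Sum>i\<in>I. d i) + real (dim (span (\<Union>i\<in>{..<n} - I. V i))) \<ge> s"
    and w: "\<forall>k<n. 0 \<le> w k"
  shows "\<exists>p\<in>JJbar n s G. (\<Sum>k<n. w k * (Jhat n s (fst p) (snd p) k - d k)) \<le> 0"
proof -
  obtain \<sigma> where \<sigma>: "bij_betw \<sigma> {..<n} {..<n}"
    and w_sorted: "\<And>a b. a \<le> b \<Longrightarrow> b < n \<Longrightarrow> w (\<sigma> a) \<le> w (\<sigma> b)"
    using sorting_permutation[where n = n and w = w] by blast
  define B where "B = greedy_chain (G \<circ> \<sigma>)"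
  define c where "c j = real (card (B j))" for j
  have c_mono: "mono c"
    unfolding mono_def c_def B_def by (simp add: card_mono greedy_chain_mono greedy_chain_finite)
  have c_hyp: "s \<le> (\<Sum>l=j..<n. d (\<sigma> l)) + c j" if "j \<le> n" for j
    unfolding c_def B_def using dimension_hyp_along_order[OF \<sigma> that gen_span hyp] .
  \<comment> \<open>q is the first stage at which the chain reaches s vectors; it exists since j = n qualifies\<close>
  define q where "q = (LEAST j. s \<le> c j)"
  have "q \<le> n" "s \<le> c q" using c_hyp[of n] unfolding q_def by (auto intro: Least_le LeastI)
  have below_q: "\<forall>j<q. c j < s" unfolding q_def using not_less_Least by fastforce
  define J where "J = chain_tuple \<sigma> B q"
  define i where "i = \<sigma> (q - 1)"
  have J: "J \<in> JJ n s G" and card_J: "(\<Sum>k<n. real (card (J k))) = c q"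
    using chain_tuple_in_JJ[OF \<sigma> \<open>q \<le> n\<close> gen_fin, of s] \<open>s \<le> c q\<close>
    by (simp_all add: J_def B_def c_def flip: of_nat_sum)
  have Jhat_\<sigma>: "Jhat n s J i (\<sigma> j) = min (c (Suc j)) s - min (c j) s" if "j < n" for j
  proof -
    have "\<sigma> j = i \<longleftrightarrow> j = q - 1"
      using \<sigma> that \<open>q \<le> n\<close> n_pos unfolding i_def bij_betw_def inj_on_def by auto
    moreover have "real (card (J (\<sigma> j))) = (if j < q then c (Suc j) - c j else 0)"
      using chain_tuple_at[OF bij_betw_imp_inj_on[OF \<sigma>] \<open>q \<le> n\<close> that, of B]
      by (simp add: J_def c_def B_def card_greedy_chain_increment)
    moreover have "c 0 = 0" by (simp add: c_def B_def)
    ultimately show ?thesis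
      unfolding Jhat_def card_J
      using truncated_increment[OF c_mono _ s_nonneg below_q \<open>s \<le> c q\<close>] by simp
  qed
  have "(J, i) \<in> JJbar n s G"
  proof -
    have "0 \<le> Jhat n s J i (\<sigma> j)" if "j < n" for j
      using Jhat_\<sigma>[OF that] c_mono by (simp add: monoD min.coboundedI1)
    then have "\<forall>k<n. 0 \<le> Jhat n s J i k"
      using \<sigma> by (metis bij_betw_iff_bijections lessThan_iff)
    moreover have "i < n"
      using \<sigma> \<open>q \<le> n\<close> n_pos unfolding i_def bij_betw_def by auto
    ultimately show ?thesis using J by (simp add: JJbar_def)
  qed
  moreover have "(\<Sum>k<n. w k * (Jhat n s J i k - d k)) \<le> 0"
    using weighted_truncated_increments[where c = c and x = "Jhat n s J i"] \<sigma> w w_sorted d_nonneg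
      c_hyp Jhat_\<sigma> by blast
  ultimately show ?thesis by force
qed

lemma JJbar_finite:
  assumes "\<forall>i<n. finite (G i)"
  shows "finite (JJbar n s G)"
proof -
  let ?tuples = "(\<lambda>f k. if k < n then f k else {}) ` (PiE {..<n} (\<lambda>k. Pow (G k)))"
  have "JJbar n s G \<subseteq> ?tuples \<times> {..<n}"
  proof clarify
    fix J i assume "(J, i) \<in> JJbar n s G"
    then have J: "\<forall>k<n. J k \<subseteq> G k" "\<forall>k\<ge>n. J k = {}" "i < n"
      unfolding JJbar_def JJ_def by auto
    then have "J = (\<lambda>k. if k < n then restrict J {..<n} k else {})" by (auto simp: fun_eq_iff)
    moreover have "restrict J {..<n} \<in> PiE {..<n} (\<lambda>k. Pow (G k))" using J by auto
    ultimately show "J \<in> ?tuples \<and> i \<in> {..<n}" using J(3) by blast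
  qed
  moreover have "finite (?tuples \<times> {..<n})"
    using assms by (intro finite_cartesian_product finite_imageI finite_PiE) auto
  ultimately show ?thesis by (rule finite_subset)
qed

theorem lemma1:
  fixes n :: nat and s :: real and d :: "nat \<Rightarrow> real"
    and V G :: "nat \<Rightarrow> 'v::euclidean_space set"
  assumes n_pos: "n \<ge> 1"
    and s_nonneg: "s \<ge> 0"
    and d_nonneg: "\<forall>i<n. d i \<ge> 0"
    and subsp: "\<forall>i<n. subspace (V i)"
    and gen_fin: "\<forall>i<n. finite (G i)"
    and gen_span: "\<forall>i<n. span (G i) = V i"
    and hyp: "\<forall>I. I \<subseteq> {..<n} \<longrightarrow>
               (\<Sum>i\<in>I. d i) + real (dim (span (\<Union>i\<in>{..<n} - I. V i))) \<ge> s"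
  shows "\<exists>\<alpha> :: ((nat \<Rightarrow> 'v set) \<times> nat) \<Rightarrow> real.
           (\<forall>p\<in>JJbar n s G. \<alpha> p \<ge> 0) \<and>
           (\<Sum>p\<in>JJbar n s G. \<alpha> p) = 1 \<and>
           (\<forall>k<n. (\<Sum>p\<in>JJbar n s G. \<alpha> p * Jhat n s (fst p) (snd p) k) \<le> d k)"
proof -
  let ?A = "JJbar n s G"
  define excess where "excess p = (\<lambda>k. Jhat n s (fst p) (snd p) k - d k)"
    for p :: "(nat \<Rightarrow> 'v set) \<times> nat"
  have fin: "finite ?A" using gen_fin by (rule JJbar_finite)
  have "\<exists>c\<in>conv_comb (excess ` ?A). \<forall>k<n. c k \<le> 0"
  proof (rule convex_combination_nonpos)
    fix w :: "nat \<Rightarrow> real" assume "\<forall>k<n. 0 \<le> w k"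
    then show "\<exists>p\<in>excess ` ?A. (\<Sum>k<n. w k * p k) \<le> 0"
      using greedy_selection[OF n_pos s_nonneg d_nonneg gen_fin gen_span hyp]
      by (auto simp: excess_def)
  qed (use fin in simp)
  then obtain c where c: "c \<in> conv_comb (excess ` ?A)" "\<forall>k<n. c k \<le> 0" by blast
  obtain \<alpha> where \<alpha>: "\<forall>p\<in>?A. 0 \<le> \<alpha> p" "sum \<alpha> ?A = 1"
      "\<And>k. c k = (\<Sum>p\<in>?A. \<alpha> p * excess p k)"
    using conv_comb_image[OF fin c(1)] by blast
  have "(\<Sum>p\<in>?A. \<alpha> p * Jhat n s (fst p) (snd p) k) = c k + sum \<alpha> ?A * d k" for k
    by (simp add: \<alpha>(3) excess_def sum_distrib_right right_diff_distrib sum_subtractf)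
  then show ?thesis using \<alpha> c(2) by auto
qed

end
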